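(* Every search game (as defined in the context) with solitary-search dominant payoffs admits a pure Nash equilibrium that is location-maximizing.
   Context: A search game $G=(N,\Omega,\Pi,\mu,K,c,v)$ consists of: a finite set of players $N=\{1,\ldots,n\}$; a finite set $\Omega$ of locations; for each player $i$ a partition $\Pi_i$ of $\Omega$, with $\pi_i(\omega)$ the cell containing $\omega$; a common prior $\mu\in\Delta(\Omega)$ with $\mu(\pi_i)>0$ for every cell of every player, and $\mu(\omega|\pi_i)=\mu(\omega)/\mu(\pi_i)$ for $\omega\in\pi_i$; capacities $K_i\in\mathbb{N}$; costs $c_i:\{0,\ldots,K_i\}\to\mathbb{R}_{\ge0}$ with $c_i(0)=0$ and nondecreasing increments $c_i(k+1)-c_i(k)\ge c_i(k)-c_i(k-1)$; rewards $v_i^m(\omega)\ge0$ with $v_i^{m+1}(\omega)\le v_i^m(\omega)$; social values $v_{\mathfrak{s}}(\omega)\ge0$. A pure strategy $s_i$ assigns to each cell $\pi_i$ a subset $s_i(\pi_i)\subseteq\pi_i$ of size at most $K_i$; $S$ is the set of pure profiles. With $m_s(\omega)=\sum_{i}\mathbf{1}_{\omega\in s_i(\pi_i(\omega))}$, player $i$'s payoff is $u_i(s)=\sum_{\omega}\mu(\omega)\big[\mathbf{1}_{\omega\in s_i(\pi_i(\omega))}v_i^{m_s(\omega)}(\omega)-c_i(|s_i(\pi_i(\omega))|)\big]$; a pure Nash equilibrium is a pure profile from which no player gains by a unilateral deviation to another pure strategy. A pure profile $s$ is location-maximizing if $\sum_{\omega\in\Omega}\mathbf{1}_{m_s(\omega)\ge1}\ge\sum_{\omega\in\Omega}\mathbf{1}_{m_{s'}(\omega)\ge1}$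 for every $s'\in S$. Payoffs are solitary-search dominant if for every player $i$, every cell $\pi_i\in\Pi_i$ and all $\omega,\omega'\in\pi_i$: $\mu(\omega|\pi_i)v_i^1(\omega)\ge\mu(\omega'|\pi_i)v_i^2(\omega')$ and $\mu(\omega|\pi_i)v_i^1(\omega)\ge c_i(K_i)-c_i(K_i-1)$. *)

theory Defs
  imports Complex_Main "HOL-Library.Disjoint_Sets"
begin

text \<open>Players are the elements of a finite type 'p (N = UNIV), locations the
elements of a finite type 'w (Omega = UNIV).  Each player i has an
information partition P i of the locations.\<close>

definition cell :: "'w set set \<Rightarrow> 'w \<Rightarrow> 'w set" where
  "cell Q \<omega> = (THE C. C \<in> Q \<and> \<omega> \<in> C)"

definition cond_prob :: "('w \<Rightarrow> real) \<Rightarrow> 'w set \<Rightarrow> 'w \<Rightarrow> real" where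
  "cond_prob \<mu> C \<omega> = \<mu> \<omega> / sum \<mu> C"

definition search_game ::
  "('p::finite \<Rightarrow> 'w::finite set set) \<Rightarrow> ('w \<Rightarrow> real) \<Rightarrow> ('p \<Rightarrow> nat)
   \<Rightarrow> ('p \<Rightarrow> nat \<Rightarrow> real) \<Rightarrow> ('p \<Rightarrow> nat \<Rightarrow> 'w \<Rightarrow> real) \<Rightarrow> ('w \<Rightarrow> real) \<Rightarrow> bool" where
  "search_game P \<mu> K c v vs \<longleftrightarrow>
     (\<forall>i. partition_on (UNIV::'w set) (P i)) \<and>
     (\<forall>\<omega>. \<mu> \<omega> \<ge> 0) \<and> (\<Sum>\<omega>\<in>UNIV. \<mu> \<omega>) = 1 \<and>
     (\<forall>i. \<forall>C\<in>P i. sum \<mu> C > 0) \<and>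
     (\<forall>i. c i 0 = 0) \<and>
     (\<forall>i k. k \<le> K i \<longrightarrow> c i k \<ge> 0) \<and>
     (\<forall>i k. 1 \<le> k \<and> k + 1 \<le> K i \<longrightarrow> c i (k + 1) - c i k \<ge> c i k - c i (k - 1)) \<and>
     (\<forall>i m \<omega>. 1 \<le> m \<and> m \<le> card (UNIV::'p set) \<longrightarrow> v i m \<omega> \<ge> 0) \<and>
     (\<forall>i m \<omega>. 1 \<le> m \<and> m < card (UNIV::'p set) \<longrightarrow> v i (m + 1) \<omega> \<le> v i m \<omega>) \<and>
     (\<forall>\<omega>. vs \<omega> \<ge> 0)"

text \<open>A pure strategy of player i: to each cell C of P i a subset of C of size at most K i.
  (Values on sets that are not cells are irrelevant.)\<close>
definition pure_strategy :: "'w set set \<Rightarrow> nat \<Rightarrow> ('w set \<Rightarrow> 'w set) \<Rightarrow> bool" where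
  "pure_strategy Q k si \<longleftrightarrow> (\<forall>C\<in>Q. si C \<subseteq> C \<and> card (si C) \<le> k)"

definition pure_profiles ::
  "('p \<Rightarrow> 'w set set) \<Rightarrow> ('p \<Rightarrow> nat) \<Rightarrow> ('p \<Rightarrow> 'w set \<Rightarrow> 'w set) set" where
  "pure_profiles P K = {s. \<forall>i. pure_strategy (P i) (K i) (s i)}"

definition searched :: "('p \<Rightarrow> 'w set set) \<Rightarrow> ('p \<Rightarrow> 'w set \<Rightarrow> 'w set) \<Rightarrow> 'p \<Rightarrow> 'w \<Rightarrow> bool" where
  "searched P s i \<omega> \<longleftrightarrow> \<omega> \<in> s i (cell (P i) \<omega>)"

definition num_searchers ::
  "('p::finite \<Rightarrow> 'w set set) \<Rightarrow> ('p \<Rightarrow> 'w set \<Rightarrow> 'w set) \<Rightarrow> 'w \<Rightarrow> nat" where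
  "num_searchers P s \<omega> = card {i. searched P s i \<omega>}"

definition payoff ::
  "('p::finite \<Rightarrow> 'w::finite set set) \<Rightarrow> ('w \<Rightarrow> real) \<Rightarrow> ('p \<Rightarrow> nat \<Rightarrow> real)
   \<Rightarrow> ('p \<Rightarrow> nat \<Rightarrow> 'w \<Rightarrow> real) \<Rightarrow> ('p \<Rightarrow> 'w set \<Rightarrow> 'w set) \<Rightarrow> 'p \<Rightarrow> real" where
  "payoff P \<mu> c v s i =
     (\<Sum>\<omega>\<in>UNIV. \<mu> \<omega> * ((if searched P s i \<omega> then v i (num_searchers P s \<omega>) \<omega> else 0)
                          - c i (card (s i (cell (P i) \<omega>)))))"

definition pure_nash ::
  "('p::finite \<Rightarrow> 'w::finite set set) \<Rightarrow> ('w \<Rightarrow> real) \<Rightarrow> ('p \<Rightarrow> nat) \<Rightarrow> ('p \<Rightarrow> nat \<Rightarrow> real)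
   \<Rightarrow> ('p \<Rightarrow> nat \<Rightarrow> 'w \<Rightarrow> real) \<Rightarrow> ('p \<Rightarrow> 'w set \<Rightarrow> 'w set) \<Rightarrow> bool" where
  "pure_nash P \<mu> K c v s \<longleftrightarrow> s \<in> pure_profiles P K \<and>
     (\<forall>i t. pure_strategy (P i) (K i) t \<longrightarrow> payoff P \<mu> c v (s(i := t)) i \<le> payoff P \<mu> c v s i)"

definition location_maximizing ::
  "('p::finite \<Rightarrow> 'w::finite set set) \<Rightarrow> ('p \<Rightarrow> nat) \<Rightarrow> ('p \<Rightarrow> 'w set \<Rightarrow> 'w set) \<Rightarrow> bool" where
  "location_maximizing P K s \<longleftrightarrow> s \<in> pure_profiles P K \<and>
     (\<forall>s'\<in>pure_profiles P K.
        card {\<omega>. num_searchers P s' \<omega> \<ge> 1} \<le> card {\<omega>. num_searchers P s \<omega> \<ge> 1})"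

definition solitary_search_dominant ::
  "('p::finite \<Rightarrow> 'w::finite set set) \<Rightarrow> ('w \<Rightarrow> real) \<Rightarrow> ('p \<Rightarrow> nat) \<Rightarrow> ('p \<Rightarrow> nat \<Rightarrow> real)
   \<Rightarrow> ('p \<Rightarrow> nat \<Rightarrow> 'w \<Rightarrow> real) \<Rightarrow> bool" where
  "solitary_search_dominant P \<mu> K c v \<longleftrightarrow>
     (\<forall>i. \<forall>C\<in>P i. \<forall>\<omega>\<in>C. \<forall>\<omega>'\<in>C.
        cond_prob \<mu> C \<omega> * v i 1 \<omega> \<ge> cond_prob \<mu> C \<omega>' * v i 2 \<omega>' \<and>
        cond_prob \<mu> C \<omega> * v i 1 \<omega> \<ge> c i (K i) - c i (K i - 1))"

end

theory Submission
  imports Defs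
begin

text \<open>
  A player's payoff is a sum over its cells: in a cell it pays the convex cost \<open>c (card T)\<close> for
  the set \<open>T\<close> it searches and earns at each \<open>\<omega> \<in> T\<close> the reward \<open>\<mu>(\<omega>|\<pi>) v\<^sup>m\<^sup>+\<^sup>1(\<omega>)\<close>,
  \<open>m\<close> being the number of other searchers of \<open>\<omega>\<close>. Under convex costs a set that is not
  improved by exchanging, adding or dropping a single location is a best response.

  The equilibrium is reached by raising capacities one unit in one cell at a time. The start is
  a location-maximizing profile with at most one searcher per location that maximizes the total
  solitary reward; by solitary-search dominance it is an equilibrium once every capacity is cut
  down to the number of locations actually searched. When a capacity grows, the player may add
  one location \<open>h\<close>, which then has one searcher more than at the start of the phase. Only a
  player that has searched \<open>h\<close> throughout the phase can now gain by deviating; it swaps \<open>h\<close> for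
  a better location, which becomes the new \<open>h\<close>, or drops it. Either way the sets of locations
  searched throughout the phase shrink, so the phase ends, in an equilibrium for the new
  capacities. Search counts never fall below their value at the start of a phase, so the
  searched locations only grow and location-maximization is preserved.
\<close>

section \<open>Selections under convex costs\<close>

definition marginal :: "(nat \<Rightarrow> real) \<Rightarrow> nat \<Rightarrow> real" where
  "marginal c k = c k - c (k - 1)"

definition increasing_increments :: "nat \<Rightarrow> (nat \<Rightarrow> real) \<Rightarrow> bool" where
  "increasing_increments K c \<longleftrightarrow> (\<forall>k. 1 \<le> k \<and> k + 1 \<le> K \<longrightarrow> marginal c k \<le> marginal c (k + 1))"

lemma increasing_increments_mono:
  "increasing_increments K c \<Longrightarrow> k \<le> K \<Longrightarrow> increasing_increments k c"
  unfolding increasing_increments_def by simp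

lemma marginal_mono:
  assumes "increasing_increments K c" "1 \<le> a" "a \<le> b" "b \<le> K"
  shows "marginal c a \<le> marginal c b"
  using assms(3,4)
proof (induction b)
  case (Suc b)
  show ?case
  proof (cases "a = Suc b")
    case False
    then have "marginal c a \<le> marginal c b" using Suc by simp
    also have "\<dots> \<le> marginal c (Suc b)"
      using assms(1,2) Suc.prems False unfolding increasing_increments_def by fastforce
    finally show ?thesis .
  qed simp
qed simp

lemma cost_decrease_le:
  assumes "increasing_increments K c" "j \<le> k" "k \<le> K"
  shows "c k - c j \<le> real (k - j) * marginal c k"
  using assms(2)
proof (induction "k - j" arbitrary: j)
  case (Suc d)
  have "d = k - Suc j" "Suc j \<le> k" using Suc.hyps(2) by arith+
  then have "c k - c (Suc j) \<le> real d * marginal c k" using Suc.hyps(1) by blast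
  moreover have "marginal c (Suc j) \<le> marginal c k"
    using marginal_mono[OF assms(1)] \<open>Suc j \<le> k\<close> assms(3) by simp
  ultimately have "c k - c j \<le> real d * marginal c k + marginal c k"
    unfolding marginal_def by simp
  then show ?case
    using Suc.hyps(2)[symmetric] by (simp add: algebra_simps)
qed simp

lemma cost_increase_ge:
  assumes "increasing_increments K c" "k \<le> k'" "k' \<le> K"
  shows "real (k' - k) * marginal c (k + 1) \<le> c k' - c k"
  using assms(2,3)
proof (induction k')
  case (Suc k')
  show ?case
  proof (cases "k = Suc k'")
    case False
    then have "real (k' - k) * marginal c (k + 1) \<le> c k' - c k" using Suc by simp
    moreover have "marginal c (k + 1) \<le> marginal c (Suc k')"
      using marginal_mono[OF assms(1)] Suc.prems False by simp
    ultimately show ?thesis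
      using Suc.prems False unfolding marginal_def by (simp add: Suc_diff_le algebra_simps)
  qed simp
qed simp

definition locally_optimal :: "('a \<Rightarrow> real) \<Rightarrow> (nat \<Rightarrow> real) \<Rightarrow> nat \<Rightarrow> 'a set \<Rightarrow> 'a set \<Rightarrow> bool" where
  "locally_optimal f c k C T \<longleftrightarrow> T \<subseteq> C \<and> card T \<le> k \<and>
     (\<forall>x\<in>T. \<forall>y\<in>C - T. f y \<le> f x) \<and>
     (card T < k \<longrightarrow> (\<forall>y\<in>C - T. f y \<le> marginal c (card T + 1))) \<and>
     (\<forall>x\<in>T. marginal c (card T) \<le> f x)"

lemma exchange_gain_le:
  fixes f :: "'a \<Rightarrow> real"
  assumes "finite T" "finite T'" "\<forall>a\<in>T' - T. f a \<le> t" "\<forall>d\<in>T - T'. t \<le> f d"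
  shows "sum f T' - sum f T \<le> (real (card T') - real (card T)) * t"
proof -
  have "sum f T' - sum f T = sum f (T' - T) - sum f (T - T')"
    using sum.Int_Diff[OF assms(1), of f T'] sum.Int_Diff[OF assms(2), of f T]
    by (simp add: Int_commute)
  also have "\<dots> \<le> real (card (T' - T)) * t - real (card (T - T')) * t"
    using sum_bounded_above[of "T' - T" f t] sum_bounded_below[of "T - T'" t f] assms(3,4) by simp
  also have "real (card (T' - T)) - real (card (T - T')) = real (card T') - real (card T)"
    using card_Int_Diff[OF assms(1), of T'] card_Int_Diff[OF assms(2), of T]
    by (simp add: Int_commute)
  then have "real (card (T' - T)) * t - real (card (T - T')) * t = (real (card T') - real (card T)) * t"
    by (metis left_diff_distrib)
  finally show ?thesis .
qed

lemma locally_optimal_imp_optimal: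
  assumes inc: "increasing_increments k c" and "finite C"
    and opt: "locally_optimal f c k C T" and "T' \<subseteq> C" "card T' \<le> k"
  shows "sum f T' - c (card T') \<le> sum f T - c (card T)"
proof -
  have T: "T \<subseteq> C" "card T \<le> k" using opt unfolding locally_optimal_def by auto
  then have fin: "finite T" "finite T'" using \<open>finite C\<close> \<open>T' \<subseteq> C\<close> finite_subset by auto
  have exchange: "\<forall>a\<in>T' - T. \<forall>d\<in>T - T'. f a \<le> f d"
    using opt \<open>T' \<subseteq> C\<close> unfolding locally_optimal_def by blast
  show ?thesis
  proof (cases "card T' \<le> card T")
    case True
    define t where "t = Max (insert (marginal c (card T)) (f ` (T' - T)))"
    have "\<forall>a\<in>T' - T. f a \<le> t" "\<forall>d\<in>T - T'. t \<le> f d" "marginal c (card T) \<le> t"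
      using exchange opt fin unfolding t_def locally_optimal_def by auto
    then have "sum f T' - sum f T \<le> - real (card T - card T') * t"
      using exchange_gain_le[OF fin] True by (simp add: of_nat_diff)
    also have "\<dots> \<le> - real (card T - card T') * marginal c (card T)"
      using \<open>marginal c (card T) \<le> t\<close> by (simp add: mult_left_mono)
    also have "\<dots> \<le> c (card T') - c (card T)"
      using cost_decrease_le[OF inc True \<open>card T \<le> k\<close>] by simp
    finally show ?thesis by simp
  next
    case False
    define t where "t = Min (insert (marginal c (card T + 1)) (f ` (T - T')))"
    have "\<forall>a\<in>T' - T. f a \<le> t" "\<forall>d\<in>T - T'. t \<le> f d" "t \<le> marginal c (card T + 1)"
      using exchange opt fin False \<open>T' \<subseteq> C\<close> \<open>card T' \<le> k\<close>
      unfolding t_def locally_optimal_def by auto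
    then have "sum f T' - sum f T \<le> real (card T' - card T) * t"
      using exchange_gain_le[OF fin] False by (simp add: of_nat_diff)
    also have "\<dots> \<le> real (card T' - card T) * marginal c (card T + 1)"
      using \<open>t \<le> marginal c (card T + 1)\<close> by (simp add: mult_left_mono)
    also have "\<dots> \<le> c (card T') - c (card T)"
      using cost_increase_ge[OF inc _ \<open>card T' \<le> k\<close>] False by simp
    finally show ?thesis by simp
  qed
qed

lemma finite_has_maximizer:
  fixes f :: "'a \<Rightarrow> 'b::linorder"
  assumes "finite S" "S \<noteq> {}"
  obtains u where "u \<in> S" "\<forall>y\<in>S. f y \<le> f u"
proof -
  have "Max (f ` S) \<in> f ` S" using assms by simp
  then obtain u where "u \<in> S" "f u = Max (f ` S)" by auto
  then show ?thesis using that assms by simp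
qed

lemma locally_optimal_mono:
  assumes "locally_optimal g c k C T" "\<forall>y\<in>C - T. f y \<le> g y" "\<forall>x\<in>T. g x \<le> f x"
  shows "locally_optimal f c k C T"
  using assms unfolding locally_optimal_def by (meson order_trans)

lemma locally_optimal_extend:
  assumes opt: "locally_optimal g c k C T" and "finite C"
  obtains h' where "set_option h' \<subseteq> C - T" "locally_optimal g c (Suc k) C (T \<union> set_option h')"
proof (cases "card T < k \<or> (\<forall>y\<in>C - T. g y \<le> marginal c (card T + 1))")
  case True
  then have "locally_optimal g c (Suc k) C T"
    using opt unfolding locally_optimal_def by auto
  then show ?thesis using that[of None] by simp
next
  case False
  have T: "T \<subseteq> C" "card T \<le> k" and swap: "\<forall>x\<in>T. \<forall>y\<in>C - T. g y \<le> g x"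
    using opt unfolding locally_optimal_def by auto
  with False have full: "card T = k" and "C - T \<noteq> {}" by auto
  then obtain u where u: "u \<in> C - T" "\<forall>y\<in>C - T. g y \<le> g u"
    using finite_has_maximizer[of "C - T" g] \<open>finite C\<close> by blast
  with False full have u_marg: "marginal c (Suc k) < g u" by force
  have "finite T" using T \<open>finite C\<close> finite_subset by blast
  then have card_uT: "card (insert u T) = Suc k" using u full by simp
  have "locally_optimal g c (Suc k) C (insert u T)"
    unfolding locally_optimal_def card_uT
  proof (intro conjI ballI impI)
    fix x y assume "x \<in> insert u T" "y \<in> C - insert u T"
    then show "g y \<le> g x" using swap u by auto
  next
    fix x assume "x \<in> insert u T"
    then have "g u \<le> g x" using swap u by auto
    then show "marginal c (Suc k) \<le> g x" using u_marg by simp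
  qed (use T u in auto)
  then show ?thesis using that[of "Some u"] u(1) by simp
qed

lemma locally_optimal_swap:
  assumes opt: "locally_optimal g c k C T" and "finite C" and "h \<in> T" and u: "u \<in> C - T"
    and u_max: "\<forall>y\<in>C - T. g y \<le> g u" and u_marg: "marginal c (card T) \<le> g u" and "a < g u"
  shows "locally_optimal (g(h := a)) c k C (insert u (T - {h}))"
proof -
  have "finite T" using opt \<open>finite C\<close> finite_subset unfolding locally_optimal_def by blast
  then have card_eq: "card (insert u (T - {h})) = card T"
    using \<open>h \<in> T\<close> u card.remove by fastforce
  have T: "T \<subseteq> C" "card T \<le> k"
    and swap: "\<forall>x\<in>T. \<forall>y\<in>C - T. g y \<le> g x"
    and add: "card T < k \<longrightarrow> (\<forall>y\<in>C - T. g y \<le> marginal c (card T + 1))"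
    and drop: "\<forall>x\<in>T. marginal c (card T) \<le> g x"
    using opt unfolding locally_optimal_def by auto
  show ?thesis
    unfolding locally_optimal_def card_eq
  proof (intro conjI ballI impI)
    fix x y assume x: "x \<in> insert u (T - {h})" and y: "y \<in> C - insert u (T - {h})"
    show "(g(h := a)) y \<le> (g(h := a)) x"
    proof (cases "y = h")
      case True
      have "a < g x \<and> x \<noteq> h"
        using x swap u \<open>a < g u\<close> \<open>h \<in> T\<close> by (auto intro: less_le_trans)
      then show ?thesis using True by simp
    next
      case False
      then show ?thesis using x y swap u_max u \<open>h \<in> T\<close> by auto
    qed
  next
    fix y assume "card T < k" and y: "y \<in> C - insert u (T - {h})"
    then have out: "\<forall>y\<in>C - T. g y \<le> marginal c (card T + 1)" using add by blast
    then have "a \<le> marginal c (card T + 1)" using u \<open>a < g u\<close> by force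
    then show "(g(h := a)) y \<le> marginal c (card T + 1)"
      using y out \<open>h \<in> T\<close> by (cases "y = h") auto
  qed (use T u_marg drop u \<open>h \<in> T\<close> in auto)
qed

lemma locally_optimal_drop:
  assumes opt: "locally_optimal g c k C T" and "finite C" and inc: "increasing_increments k c"
    and "h \<in> T" and h_low: "a < marginal c (card T)"
    and out_low: "\<forall>y\<in>C - T. g y \<le> marginal c (card T)"
  shows "locally_optimal (g(h := a)) c k C (T - {h})"
proof -
  have T: "T \<subseteq> C" "card T \<le> k"
    and swap: "\<forall>x\<in>T. \<forall>y\<in>C - T. g y \<le> g x"
    and drop: "\<forall>x\<in>T. marginal c (card T) \<le> g x"
    using opt unfolding locally_optimal_def by auto
  have "finite T" using T \<open>finite C\<close> finite_subset by blast
  then have card_T: "card T = Suc (card (T - {h}))"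
    using \<open>h \<in> T\<close> by (rule card.remove)
  show ?thesis
    unfolding locally_optimal_def
  proof (intro conjI ballI impI)
    fix x y assume x: "x \<in> T - {h}" and y: "y \<in> C - (T - {h})"
    show "(g(h := a)) y \<le> (g(h := a)) x"
    proof (cases "y = h")
      case True
      have "marginal c (card T) \<le> g x" using drop x by blast
      then show ?thesis using True x h_low by simp
    next
      case False
      then show ?thesis using swap x y by simp
    qed
  next
    fix y assume "y \<in> C - (T - {h})"
    then show "(g(h := a)) y \<le> marginal c (card (T - {h}) + 1)"
      using out_low h_low card_T by (cases "y = h") simp_all
  next
    fix x assume x: "x \<in> T - {h}"
    then have "1 \<le> card (T - {h})"
      using \<open>finite T\<close> by (metis One_nat_def Suc_leI card_gt_0_iff empty_iff finite_Diff)
    then have "marginal c (card (T - {h})) \<le> marginal c (card T)"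
      using marginal_mono[OF inc] card_T T by simp
    also have "\<dots> \<le> g x" using x drop by blast
    finally show "marginal c (card (T - {h})) \<le> (g(h := a)) x"
      using x by simp
  qed (use T card_T in auto)
qed

lemma locally_optimal_reselect:
  assumes opt: "locally_optimal g c k C T" and "finite C" and inc: "increasing_increments k c"
    and "h \<in> T" and broken: "\<not> locally_optimal (g(h := a)) c k C T"
  obtains h' where "set_option h' \<subseteq> C - T"
    "locally_optimal (g(h := a)) c k C (T - {h} \<union> set_option h')"
proof -
  note obtained = that
  have swap: "\<forall>x\<in>T. \<forall>y\<in>C - T. g y \<le> g x"
    using opt unfolding locally_optimal_def by blast
  have fail: "(\<exists>y\<in>C - T. a < g y) \<or> a < marginal c (card T)"
  proof (rule ccontr)
    assume "\<not> ?thesis"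
    then have "\<forall>y\<in>C - T. g y \<le> a" "marginal c (card T) \<le> a" by (auto simp: not_less)
    then have "locally_optimal (g(h := a)) c k C T"
      using opt \<open>h \<in> T\<close> unfolding locally_optimal_def by auto
    then show False using broken by blast
  qed
  have drop: ?thesis if out_low: "\<forall>y\<in>C - T. g y < marginal c (card T)"
  proof -
    have "a < marginal c (card T)" using fail out_low by force
    then show ?thesis
      using locally_optimal_drop[OF opt \<open>finite C\<close> inc \<open>h \<in> T\<close>] out_low obtained[of None]
      by (simp add: less_imp_le)
  qed
  show ?thesis
  proof (cases "C - T = {}")
    case True
    then show ?thesis using drop by blast
  next
    case False
    then obtain u where u: "u \<in> C - T" "\<forall>y\<in>C - T. g y \<le> g u"
      using finite_has_maximizer[of "C - T" g] \<open>finite C\<close> by blast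
    show ?thesis
    proof (cases "marginal c (card T) \<le> g u \<and> a < g u")
      case True
      then show ?thesis
        using locally_optimal_swap[OF opt \<open>finite C\<close> \<open>h \<in> T\<close> u] obtained[of "Some u"] u(1) by simp
    next
      case False
      have "g u < marginal c (card T)"
      proof (rule ccontr)
        assume "\<not> g u < marginal c (card T)"
        with False have "g u \<le> a" "marginal c (card T) \<le> g u" by auto
        with fail u show False by force
      qed
      then have "\<forall>y\<in>C - T. g y < marginal c (card T)" using u by force
      then show ?thesis using drop by blast
    qed
  qed
qed

section \<open>Search games\<close>

lemma location_maximizing_mono:
  assumes "location_maximizing P K s" "s' \<in> pure_profiles P K"
    and "\<forall>\<omega>. num_searchers P s \<omega> \<le> num_searchers P s' \<omega>"
  shows "location_maximizing P K s'"
proof -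
  have "card {\<omega>. num_searchers P s \<omega> \<ge> 1} \<le> card {\<omega>. num_searchers P s' \<omega> \<ge> 1}"
    using assms(3) by (intro card_mono) (auto intro: order_trans)
  then show ?thesis
    using assms(1,2) unfolding location_maximizing_def by (meson order_trans)
qed

lemma pure_profiles_update:
  assumes "s \<in> pure_profiles P K" "T \<subseteq> C" "card T \<le> K i"
  shows "s(i := (s i)(C := T)) \<in> pure_profiles P K"
  using assms unfolding pure_profiles_def pure_strategy_def by auto

lemma card_insert_remove:
  assumes "finite A" "x \<in> A" "y \<notin> A"
  shows "card (insert y (A - {x})) = card A"
proof -
  have "card (insert y (A - {x})) = Suc (card (A - {x}))" using assms by simp
  also have "\<dots> = card A" using card.remove[OF assms(1,2)] by simp
  finally show ?thesis .
qed

lemma exists_location_maximizing_solitary: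
  "\<exists>s. location_maximizing P K s \<and> (\<forall>\<omega>. num_searchers P s \<omega> \<le> 1)"
proof -
  have "(\<lambda>i C. {}) \<in> pure_profiles P K" unfolding pure_profiles_def pure_strategy_def by simp
  then obtain s where s: "s \<in> pure_profiles P K"
    and s_max: "\<forall>s'\<in>pure_profiles P K.
      card {\<omega>. num_searchers P s' \<omega> \<ge> 1} \<le> card {\<omega>. num_searchers P s \<omega> \<ge> 1}"
    using finite_has_maximizer[of "pure_profiles P K" "\<lambda>s. card {\<omega>. num_searchers P s \<omega> \<ge> 1}"]
    by auto
  define chosen where "chosen \<omega> = (SOME j. searched P s j \<omega>)" for \<omega>
  define s1 where "s1 i C = {\<omega> \<in> s i C. chosen \<omega> = i}" for i C
  have searched1: "searched P s1 j \<omega> \<longleftrightarrow> searched P s j \<omega> \<and> chosen \<omega> = j" for j \<omega>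
    unfolding searched_def s1_def by simp
  have solitary: "num_searchers P s1 \<omega> \<le> 1" for \<omega>
  proof -
    have "{j. searched P s1 j \<omega>} \<subseteq> {chosen \<omega>}" by (auto simp: searched1)
    then have "card {j. searched P s1 j \<omega>} \<le> card {chosen \<omega>}" by (intro card_mono) auto
    then show ?thesis unfolding num_searchers_def by simp
  qed
  have same_cover: "num_searchers P s1 \<omega> \<ge> 1 \<longleftrightarrow> num_searchers P s \<omega> \<ge> 1" for \<omega>
  proof -
    have "(\<exists>j. searched P s1 j \<omega>) \<longleftrightarrow> (\<exists>j. searched P s j \<omega>)"
      unfolding searched1 chosen_def by (metis someI_ex)
    then show ?thesis unfolding num_searchers_def by (simp add: Suc_le_eq card_gt_0_iff)
  qed
  have sub: "s1 i C \<subseteq> s i C" for i C unfolding s1_def by blast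
  have "s1 \<in> pure_profiles P K"
    unfolding pure_profiles_def pure_strategy_def
  proof (intro CollectI allI ballI conjI)
    fix i C assume "C \<in> P i"
    then have "s i C \<subseteq> C" "card (s i C) \<le> K i"
      using s unfolding pure_profiles_def pure_strategy_def by auto
    moreover have "card (s1 i C) \<le> card (s i C)" using sub by (intro card_mono) auto
    ultimately show "s1 i C \<subseteq> C" "card (s1 i C) \<le> K i" using sub[of i C] by auto
  qed
  then have "location_maximizing P K s1"
    using s_max same_cover unfolding location_maximizing_def by simp
  then show ?thesis using solitary by blast
qed

locale search_game_model =
  fixes P :: "'p::finite \<Rightarrow> 'w::finite set set" and \<mu> :: "'w \<Rightarrow> real" and K :: "'p \<Rightarrow> nat"
    and c :: "'p \<Rightarrow> nat \<Rightarrow> real" and v :: "'p \<Rightarrow> nat \<Rightarrow> 'w \<Rightarrow> real" and vs :: "'w \<Rightarrow> real"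
  assumes game: "search_game P \<mu> K c v vs"
begin

lemma partition: "partition_on UNIV (P i)"
  using game unfolding search_game_def by blast

lemma cell_mass_pos: "C \<in> P i \<Longrightarrow> 0 < sum \<mu> C"
  using game unfolding search_game_def by blast

lemma costs_increasing_increments: "increasing_increments (K i) (c i)"
  using game unfolding search_game_def increasing_increments_def marginal_def by simp

lemma cell_eqI: "C \<in> P i \<Longrightarrow> \<omega> \<in> C \<Longrightarrow> cell (P i) \<omega> = C"
  unfolding cell_def using partition_onD2[OF partition, of i]
  by (intro the_equality) (auto simp: disjoint_def)

lemma in_cell: "\<omega> \<in> cell (P i) \<omega>"
proof -
  obtain C where "C \<in> P i" "\<omega> \<in> C" using partition_onD1[OF partition, of i] by blast
  then show ?thesis using cell_eqI by simp
qed

lemma searched_iff: "C \<in> P i \<Longrightarrow> \<omega> \<in> C \<Longrightarrow> searched P s i \<omega> \<longleftrightarrow> \<omega> \<in> s i C"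
  unfolding searched_def using cell_eqI by simp

lemma searched_update_cell:
  assumes "C \<in> P i"
  shows "searched P (s(i := (s i)(C := T))) j \<omega> \<longleftrightarrow>
    (if j = i \<and> \<omega> \<in> C then \<omega> \<in> T else searched P s j \<omega>)"
  using cell_eqI[OF assms] in_cell[of \<omega> i] unfolding searched_def by auto

definition other_searchers :: "('p \<Rightarrow> 'w set \<Rightarrow> 'w set) \<Rightarrow> 'p \<Rightarrow> 'w \<Rightarrow> nat" where
  "other_searchers s i \<omega> = card {j. j \<noteq> i \<and> searched P s j \<omega>}"

lemma num_searchers_split:
  "num_searchers P s \<omega> = other_searchers s i \<omega> + (if searched P s i \<omega> then 1 else 0)"
proof -
  have "{j. searched P s j \<omega>} =
      {j. j \<noteq> i \<and> searched P s j \<omega>} \<union> (if searched P s i \<omega> then {i} else {})"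
    by auto
  then show ?thesis
    unfolding num_searchers_def other_searchers_def by (simp add: card_Un_disjoint)
qed

lemma other_searchers_less: "other_searchers s i \<omega> < card (UNIV :: 'p set)"
  unfolding other_searchers_def by (rule psubset_card_mono) auto

lemma unsearched_num_searchers_less:
  "\<not> searched P s i \<omega> \<Longrightarrow> num_searchers P s \<omega> < card (UNIV :: 'p set)"
  using num_searchers_split[of s \<omega> i] other_searchers_less[of s i \<omega>] by simp

lemma other_searchers_update: "other_searchers (s(i := t)) i \<omega> = other_searchers s i \<omega>"
proof -
  have "{j. j \<noteq> i \<and> searched P (s(i := t)) j \<omega>} = {j. j \<noteq> i \<and> searched P s j \<omega>}"
    unfolding searched_def by auto
  then show ?thesis unfolding other_searchers_def by simp
qed

lemma num_searchers_update_cell: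
  assumes "C \<in> P i"
  shows "num_searchers P (s(i := (s i)(C := T))) \<omega> + (if \<omega> \<in> C \<and> \<omega> \<in> s i C then 1 else 0)
    = num_searchers P s \<omega> + (if \<omega> \<in> C \<and> \<omega> \<in> T then 1 else 0)"
  using num_searchers_split[of "s(i := (s i)(C := T))" \<omega> i] num_searchers_split[of s \<omega> i]
    other_searchers_update searched_update_cell[OF assms] searched_iff[OF assms]
  by auto

definition reward :: "'p \<Rightarrow> 'w \<Rightarrow> nat \<Rightarrow> real" where
  "reward i \<omega> m = cond_prob \<mu> (cell (P i) \<omega>) \<omega> * v i m \<omega>"

lemma reward_Suc_le:
  assumes "1 \<le> m" "m < card (UNIV :: 'p set)"
  shows "reward i \<omega> (Suc m) \<le> reward i \<omega> m"
proof -
  have "v i (Suc m) \<omega> \<le> v i m \<omega>" using game assms unfolding search_game_def by simp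
  moreover have "0 \<le> cond_prob \<mu> (cell (P i) \<omega>) \<omega>"
    using game unfolding search_game_def cond_prob_def by (simp add: sum_nonneg)
  ultimately show ?thesis unfolding reward_def by (simp add: mult_left_mono)
qed

definition entry_reward :: "('p \<Rightarrow> 'w set \<Rightarrow> 'w set) \<Rightarrow> 'p \<Rightarrow> 'w \<Rightarrow> real" where
  "entry_reward s i \<omega> = reward i \<omega> (other_searchers s i \<omega> + 1)"

lemma sum_over_cells: "(\<Sum>\<omega>\<in>UNIV. f \<omega>) = (\<Sum>C\<in>P i. sum f C)"
  using sum.Union_disjoint[of "P i" f] partition_onD1[OF partition, of i]
    partition_onD2[OF partition, of i]
  by (simp add: disjoint_def)

lemma mass_times_reward:
  "C \<in> P i \<Longrightarrow> \<omega> \<in> C \<Longrightarrow> sum \<mu> C * reward i \<omega> m = \<mu> \<omega> * v i m \<omega>"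
  unfolding reward_def cond_prob_def using cell_eqI cell_mass_pos[of C i] by simp

lemma payoff_deviation:
  assumes "\<forall>C\<in>P i. t C \<subseteq> C"
  shows "payoff P \<mu> c v (s(i := t)) i =
    (\<Sum>C\<in>P i. sum \<mu> C * (sum (entry_reward s i) (t C) - c i (card (t C))))"
proof -
  define f where "f \<omega> = \<mu> \<omega> * ((if \<omega> \<in> t (cell (P i) \<omega>) then v i (other_searchers s i \<omega> + 1) \<omega> else 0)
      - c i (card (t (cell (P i) \<omega>))))" for \<omega>
  have "payoff P \<mu> c v (s(i := t)) i = (\<Sum>\<omega>\<in>UNIV. f \<omega>)"
    unfolding payoff_def f_def
    using num_searchers_split[of "s(i := t)" _ i] other_searchers_update
    by (simp add: searched_def cong: if_cong)
  also have "\<dots> = (\<Sum>C\<in>P i. sum f C)" by (rule sum_over_cells)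
  also have "\<dots> = (\<Sum>C\<in>P i. sum \<mu> C * (sum (entry_reward s i) (t C) - c i (card (t C))))"
  proof (rule sum.cong[OF refl])
    fix C assume C: "C \<in> P i"
    have "sum f C = (\<Sum>\<omega>\<in>C. (if \<omega> \<in> t C then \<mu> \<omega> * v i (other_searchers s i \<omega> + 1) \<omega> else 0)
        - \<mu> \<omega> * c i (card (t C)))"
      unfolding f_def using cell_eqI[OF C] by (intro sum.cong refl) (simp add: right_diff_distrib)
    also have "\<dots> = (\<Sum>\<omega>\<in>C. if \<omega> \<in> t C then \<mu> \<omega> * v i (other_searchers s i \<omega> + 1) \<omega> else 0)
        - sum \<mu> C * c i (card (t C))"
      by (simp add: sum_subtractf sum_distrib_right)
    also have "(\<Sum>\<omega>\<in>C. if \<omega> \<in> t C then \<mu> \<omega> * v i (other_searchers s i \<omega> + 1) \<omega> else 0)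
        = (\<Sum>\<omega>\<in>t C. \<mu> \<omega> * v i (other_searchers s i \<omega> + 1) \<omega>)"
      unfolding sum.inter_restrict[OF finite, where B = "t C", symmetric]
      using assms C by (simp add: Int_absorb1)
    also have "\<dots> = (\<Sum>\<omega>\<in>t C. sum \<mu> C * entry_reward s i \<omega>)"
    proof (rule sum.cong[OF refl])
      fix \<omega> assume "\<omega> \<in> t C"
      then have "\<omega> \<in> C" using assms C by blast
      then show "\<mu> \<omega> * v i (other_searchers s i \<omega> + 1) \<omega> = sum \<mu> C * entry_reward s i \<omega>"
        unfolding entry_reward_def using mass_times_reward[OF C] by simp
    qed
    finally show "sum f C = sum \<mu> C * (sum (entry_reward s i) (t C) - c i (card (t C)))"
      by (simp add: sum_distrib_left right_diff_distrib)
  qed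
  finally show ?thesis .
qed

text \<open>An equilibrium of the game in which player \<open>i\<close> may search at most \<open>r i C\<close> locations of its
  cell \<open>C\<close>.\<close>

definition restricted_equilibrium :: "('p \<Rightarrow> 'w set \<Rightarrow> nat) \<Rightarrow> ('p \<Rightarrow> 'w set \<Rightarrow> 'w set) \<Rightarrow> bool" where
  "restricted_equilibrium r s \<longleftrightarrow>
     (\<forall>i. \<forall>C\<in>P i. r i C \<le> K i \<and> locally_optimal (entry_reward s i) (c i) (r i C) C (s i C))"

lemma restricted_equilibrium_in_profiles:
  "restricted_equilibrium r s \<Longrightarrow> s \<in> pure_profiles P K"
  unfolding restricted_equilibrium_def locally_optimal_def pure_profiles_def pure_strategy_def
  by (blast intro: le_trans)

lemma restricted_equilibrium_imp_nash:
  assumes eq: "restricted_equilibrium r s" and full: "\<forall>i. \<forall>C\<in>P i. r i C = K i"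
  shows "pure_nash P \<mu> K c v s"
  unfolding pure_nash_def
proof (intro conjI allI impI)
  show "s \<in> pure_profiles P K" using restricted_equilibrium_in_profiles[OF eq] .
next
  fix i t assume "pure_strategy (P i) (K i) t"
  then have t: "\<forall>C\<in>P i. t C \<subseteq> C \<and> card (t C) \<le> K i" unfolding pure_strategy_def by blast
  have s: "\<forall>C\<in>P i. s i C \<subseteq> C"
    using eq unfolding restricted_equilibrium_def locally_optimal_def by blast
  have "payoff P \<mu> c v (s(i := t)) i =
      (\<Sum>C\<in>P i. sum \<mu> C * (sum (entry_reward s i) (t C) - c i (card (t C))))"
    using t by (simp add: payoff_deviation)
  also have "\<dots> \<le> (\<Sum>C\<in>P i. sum \<mu> C * (sum (entry_reward s i) (s i C) - c i (card (s i C))))"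
  proof (rule sum_mono, rule mult_left_mono)
    fix C assume C: "C \<in> P i"
    then have "locally_optimal (entry_reward s i) (c i) (r i C) C (s i C)"
      using eq unfolding restricted_equilibrium_def by blast
    then have opt: "locally_optimal (entry_reward s i) (c i) (K i) C (s i C)"
      using full C by simp
    have "t C \<subseteq> C" "card (t C) \<le> K i" using t C by auto
    then show "sum (entry_reward s i) (t C) - c i (card (t C))
        \<le> sum (entry_reward s i) (s i C) - c i (card (s i C))"
      using locally_optimal_imp_optimal[OF costs_increasing_increments _ opt] by simp
    show "0 \<le> sum \<mu> C" using cell_mass_pos[OF C] by simp
  qed
  also have "\<dots> = payoff P \<mu> c v (s(i := s i)) i"
    using payoff_deviation[OF s, of s] by simp
  finally show "payoff P \<mu> c v (s(i := t)) i \<le> payoff P \<mu> c v s i" by simp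
qed

section \<open>Raising the capacities\<close>

definition cells_sum :: "('p \<Rightarrow> 'w set \<Rightarrow> nat) \<Rightarrow> nat" where
  "cells_sum f = (\<Sum>i\<in>UNIV. \<Sum>C\<in>P i. f i C)"

lemma cells_sum_less:
  assumes "C \<in> P i" "g i C < f i C" "\<forall>j. \<forall>D\<in>P j. g j D \<le> f j D"
  shows "cells_sum g < cells_sum f"
  unfolding cells_sum_def
proof (rule sum_strict_mono_ex1)
  show "\<forall>j\<in>UNIV. (\<Sum>D\<in>P j. g j D) \<le> (\<Sum>D\<in>P j. f j D)"
    using assms(3) by (simp add: sum_mono)
  have "(\<Sum>D\<in>P i. g i D) < (\<Sum>D\<in>P i. f i D)"
    using assms by (intro sum_strict_mono_ex1) auto
  then show "\<exists>j\<in>UNIV. (\<Sum>D\<in>P j. g j D) < (\<Sum>D\<in>P j. f j D)" by blast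
qed simp

text \<open>During a phase, \<open>n\<close> is the search count at its start and \<open>h\<close> the only location whose count
  has risen since, by one. \<open>Old i C\<close> holds the locations of \<open>C\<close> that \<open>i\<close> has searched throughout
  the phase, so \<open>n\<close> already counts \<open>i\<close> there; elsewhere the nominal reward charges \<open>i\<close> as an
  additional searcher.\<close>

definition nominal_reward :: "('w \<Rightarrow> nat) \<Rightarrow> 'w set \<Rightarrow> 'p \<Rightarrow> 'w \<Rightarrow> real" where
  "nominal_reward n Old i \<omega> = reward i \<omega> (if \<omega> \<in> Old then n \<omega> else n \<omega> + 1)"

definition cell_invar :: "nat \<Rightarrow> ('w \<Rightarrow> nat) \<Rightarrow> 'p \<Rightarrow> 'w set \<Rightarrow> 'w set \<Rightarrow> 'w set \<Rightarrow> bool" where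
  "cell_invar k n i C Old T \<longleftrightarrow> k \<le> K i \<and> Old \<subseteq> T \<and> (\<forall>x\<in>T - Old. n x < card (UNIV :: 'p set)) \<and>
     locally_optimal (nominal_reward n Old i) (c i) k C T"

definition phase_invar ::
  "('p \<Rightarrow> 'w set \<Rightarrow> nat) \<Rightarrow> ('w \<Rightarrow> nat) \<Rightarrow> ('p \<Rightarrow> 'w set \<Rightarrow> 'w set) \<Rightarrow> 'w option
    \<Rightarrow> ('p \<Rightarrow> 'w set \<Rightarrow> 'w set) \<Rightarrow> bool" where
  "phase_invar r n Old h s \<longleftrightarrow>
     (\<forall>\<omega>. num_searchers P s \<omega> = n \<omega> + (if h = Some \<omega> then 1 else 0)) \<and>
     (\<forall>i. \<forall>C\<in>P i. cell_invar (r i C) n i C (Old i C) (s i C))"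

lemma phase_invar_entry_optimal:
  assumes inv: "phase_invar r n Old h s" and C: "C \<in> P i"
    and opt: "locally_optimal (nominal_reward n (Old i C - set_option h) i) (c i) (r i C) C (s i C)"
  shows "locally_optimal (entry_reward s i) (c i) (r i C) C (s i C)"
proof (rule locally_optimal_mono[OF opt])
  have T: "s i C \<subseteq> C" using opt unfolding locally_optimal_def by blast
  have cell: "Old i C \<subseteq> s i C" "\<forall>x\<in>s i C - Old i C. n x < card (UNIV :: 'p set)"
    using inv C unfolding phase_invar_def cell_invar_def by blast+
  have count: "other_searchers s i \<omega> + (if \<omega> \<in> s i C then 1 else 0) = n \<omega> + (if h = Some \<omega> then 1 else 0)"
    if "\<omega> \<in> C" for \<omega>
    using inv num_searchers_split[of s \<omega> i] searched_iff[OF C that] unfolding phase_invar_def by simp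
  show "\<forall>y\<in>C - s i C. entry_reward s i y \<le> nominal_reward n (Old i C - set_option h) i y"
  proof
    fix y assume y: "y \<in> C - s i C"
    then have others: "other_searchers s i y = n y + (if h = Some y then 1 else 0)"
      using count[of y] by simp
    have "y \<notin> Old i C" using y cell by blast
    show "entry_reward s i y \<le> nominal_reward n (Old i C - set_option h) i y"
    proof (cases "h = Some y")
      case True
      have "n y + 1 < card (UNIV :: 'p set)"
        using others True other_searchers_less[of s i y] by simp
      then show ?thesis
        using True others \<open>y \<notin> Old i C\<close> reward_Suc_le[of "n y + 1" i y]
        unfolding entry_reward_def nominal_reward_def by simp
    next
      case False
      then show ?thesis
        using others \<open>y \<notin> Old i C\<close> unfolding entry_reward_def nominal_reward_def by simp
    qed
  qed
  show "\<forall>x\<in>s i C. nominal_reward n (Old i C - set_option h) i x \<le> entry_reward s i x"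
  proof
    fix x assume x: "x \<in> s i C"
    then have others: "other_searchers s i x + 1 = n x + (if h = Some x then 1 else 0)"
      using count[of x] T by auto
    consider "h = Some x" | "h \<noteq> Some x" "x \<in> Old i C" | "h \<noteq> Some x" "x \<notin> Old i C" by blast
    then show "nominal_reward n (Old i C - set_option h) i x \<le> entry_reward s i x"
    proof cases
      case 3
      then have "1 \<le> n x" "n x < card (UNIV :: 'p set)" using others cell x by auto
      then show ?thesis
        using 3 others reward_Suc_le[of "n x" i x] unfolding entry_reward_def nominal_reward_def by simp
    qed (use others in \<open>auto simp: entry_reward_def nominal_reward_def\<close>)
  qed
qed

lemma phase_invar_update:
  assumes "\<forall>j. \<forall>D\<in>P j. (j, D) \<noteq> (i, C) \<longrightarrow> cell_invar (r j D) n j D (Old j D) (s j D)"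
    and "cell_invar (r i C) n i C X T"
    and "\<forall>\<omega>. num_searchers P (s(i := (s i)(C := T))) \<omega> = n \<omega> + (if h = Some \<omega> then 1 else 0)"
  shows "phase_invar r n (Old(i := (Old i)(C := X))) h (s(i := (s i)(C := T)))"
  using assms unfolding phase_invar_def by auto

lemma phase_invar_move:
  assumes inv: "phase_invar r n Old (Some h) s" and C: "C \<in> P i" and "h \<in> Old i C"
    and h': "set_option h' \<subseteq> C - s i C"
    and opt: "locally_optimal (nominal_reward n (Old i C - {h}) i) (c i) (r i C) C
      (s i C - {h} \<union> set_option h')"
  shows "phase_invar r n (Old(i := (Old i)(C := Old i C - {h}))) h'
    (s(i := (s i)(C := s i C - {h} \<union> set_option h')))"
proof (rule phase_invar_update)
  show "\<forall>j. \<forall>D\<in>P j. (j, D) \<noteq> (i, C) \<longrightarrow> cell_invar (r j D) n j D (Old j D) (s j D)"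
    using inv unfolding phase_invar_def by blast
  have cell: "cell_invar (r i C) n i C (Old i C) (s i C)"
    using inv C unfolding phase_invar_def by blast
  then have "h \<in> s i C" "s i C \<subseteq> C"
    using \<open>h \<in> Old i C\<close> unfolding cell_invar_def locally_optimal_def by auto
  have counts: "num_searchers P s \<omega> = n \<omega> + (if h = \<omega> then 1 else 0)" for \<omega>
    using inv unfolding phase_invar_def by simp
  have "n x < card (UNIV :: 'p set)" if "x \<in> set_option h'" for x
  proof -
    have "\<not> searched P s i x" using searched_iff[OF C, of x s] h' that by blast
    then show ?thesis
      using unsearched_num_searchers_less counts[of x] h' that \<open>h \<in> s i C\<close> by fastforce
  qed
  then show "cell_invar (r i C) n i C (Old i C - {h}) (s i C - {h} \<union> set_option h')"
    using cell opt unfolding cell_invar_def by auto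
  show "\<forall>\<omega>. num_searchers P (s(i := (s i)(C := s i C - {h} \<union> set_option h'))) \<omega>
      = n \<omega> + (if h' = Some \<omega> then 1 else 0)"
  proof
    fix \<omega>
    show "num_searchers P (s(i := (s i)(C := s i C - {h} \<union> set_option h'))) \<omega>
        = n \<omega> + (if h' = Some \<omega> then 1 else 0)"
      using num_searchers_update_cell[OF C, of s "s i C - {h} \<union> set_option h'" \<omega>] counts[of \<omega>]
        \<open>h \<in> s i C\<close> \<open>s i C \<subseteq> C\<close> h'
      by (cases "\<omega> = h"; cases "h' = Some \<omega>") auto
  qed
qed

lemma phase_step:
  assumes inv: "phase_invar r n Old (Some h) s" and C: "C \<in> P i" and "h \<in> Old i C"
    and broken: "\<not> locally_optimal (nominal_reward n (Old i C - {h}) i) (c i) (r i C) C (s i C)"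
  shows "\<exists>Old' h' s'. phase_invar r n Old' h' s' \<and>
    cells_sum (\<lambda>j D. card (Old' j D)) < cells_sum (\<lambda>j D. card (Old j D))"
proof -
  have "cell_invar (r i C) n i C (Old i C) (s i C)"
    using inv C unfolding phase_invar_def by blast
  then have opt: "locally_optimal (nominal_reward n (Old i C) i) (c i) (r i C) C (s i C)"
    and "h \<in> s i C" and inc: "increasing_increments (r i C) (c i)"
    using \<open>h \<in> Old i C\<close> increasing_increments_mono[OF costs_increasing_increments]
    unfolding cell_invar_def by auto
  have "nominal_reward n (Old i C - {h}) i = (nominal_reward n (Old i C) i)(h := reward i h (n h + 1))"
    by (auto simp: nominal_reward_def)
  then obtain h' where "set_option h' \<subseteq> C - s i C" and
    "locally_optimal (nominal_reward n (Old i C - {h}) i) (c i) (r i C) C (s i C - {h} \<union> set_option h')"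
    using locally_optimal_reselect[OF opt finite inc \<open>h \<in> s i C\<close>] broken by metis
  then have "phase_invar r n (Old(i := (Old i)(C := Old i C - {h}))) h'
      (s(i := (s i)(C := s i C - {h} \<union> set_option h')))"
    using phase_invar_move[OF inv C \<open>h \<in> Old i C\<close>] by blast
  moreover have "cells_sum (\<lambda>j D. card ((Old(i := (Old i)(C := Old i C - {h}))) j D))
      < cells_sum (\<lambda>j D. card (Old j D))"
    using C card_Diff1_less[OF finite \<open>h \<in> Old i C\<close>]
    by (intro cells_sum_less[of C i]) (auto simp: card_mono simp del: card_Diff_singleton)
  ultimately show ?thesis by blast
qed

lemma phase_terminates:
  "phase_invar r n Old h s \<Longrightarrow> \<exists>s'. restricted_equilibrium r s' \<and> (\<forall>\<omega>. n \<omega> \<le> num_searchers P s' \<omega>)"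
proof (induction "cells_sum (\<lambda>j D. card (Old j D))" arbitrary: Old h s rule: less_induct)
  case less
  show ?case
  proof (cases "\<forall>i. \<forall>C\<in>P i.
      locally_optimal (nominal_reward n (Old i C - set_option h) i) (c i) (r i C) C (s i C)")
    case True
    then have "restricted_equilibrium r s"
      using less.prems phase_invar_entry_optimal
      unfolding restricted_equilibrium_def phase_invar_def cell_invar_def by blast
    moreover have "\<forall>\<omega>. n \<omega> \<le> num_searchers P s \<omega>"
      using less.prems unfolding phase_invar_def by simp
    ultimately show ?thesis by blast
  next
    case False
    then obtain i C where C: "C \<in> P i"
      and broken: "\<not> locally_optimal (nominal_reward n (Old i C - set_option h) i) (c i) (r i C) C (s i C)"
      by blast
    have opt: "locally_optimal (nominal_reward n (Old i C) i) (c i) (r i C) C (s i C)"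
      using less.prems C unfolding phase_invar_def cell_invar_def by blast
    obtain x where "h = Some x" "x \<in> Old i C"
    proof (cases h)
      case None
      then show ?thesis using broken opt by simp
    next
      case (Some x)
      moreover have "x \<in> Old i C"
      proof (rule ccontr)
        assume "x \<notin> Old i C"
        then have "Old i C - set_option h = Old i C" using Some by auto
        then show False using broken opt by simp
      qed
      ultimately show ?thesis using that by blast
    qed
    then show ?thesis
      using phase_step[of r n Old x s C i] less broken C by auto
  qed
qed

lemma restricted_equilibrium_cell_invar:
  assumes eq: "restricted_equilibrium r s" and C: "C \<in> P i"
  shows "cell_invar (r i C) (num_searchers P s) i C (s i C) (s i C)"
proof -
  have "r i C \<le> K i" and opt: "locally_optimal (entry_reward s i) (c i) (r i C) C (s i C)"
    using eq C unfolding restricted_equilibrium_def by blast+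
  have "nominal_reward (num_searchers P s) (s i C) i \<omega> = entry_reward s i \<omega>" if "\<omega> \<in> C" for \<omega>
    using num_searchers_split[of s \<omega> i] searched_iff[OF C that]
    unfolding nominal_reward_def entry_reward_def by simp
  then have "locally_optimal (nominal_reward (num_searchers P s) (s i C) i) (c i) (r i C) C (s i C)"
    using opt unfolding locally_optimal_def by auto
  then show ?thesis
    using \<open>r i C \<le> K i\<close> unfolding cell_invar_def by simp
qed

lemma phase_invar_start:
  assumes eq: "restricted_equilibrium r s" and C: "C \<in> P i" and "k \<le> K i"
    and h': "set_option h' \<subseteq> C - s i C"
    and opt: "locally_optimal (nominal_reward (num_searchers P s) (s i C) i) (c i) k C
      (s i C \<union> set_option h')"
  shows "phase_invar (r(i := (r i)(C := k))) (num_searchers P s) s h'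
    (s(i := (s i)(C := s i C \<union> set_option h')))"
proof -
  have "\<forall>x\<in>set_option h'. num_searchers P s x < card (UNIV :: 'p set)"
    using unsearched_num_searchers_less searched_iff[OF C] h' by blast
  then have "cell_invar k (num_searchers P s) i C (s i C) (s i C \<union> set_option h')"
    using \<open>k \<le> K i\<close> opt unfolding cell_invar_def by auto
  moreover have "\<forall>\<omega>. num_searchers P (s(i := (s i)(C := s i C \<union> set_option h'))) \<omega>
      = num_searchers P s \<omega> + (if h' = Some \<omega> then 1 else 0)"
  proof
    fix \<omega>
    show "num_searchers P (s(i := (s i)(C := s i C \<union> set_option h'))) \<omega>
        = num_searchers P s \<omega> + (if h' = Some \<omega> then 1 else 0)"
      using num_searchers_update_cell[OF C, of s "s i C \<union> set_option h'" \<omega>] h'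
      by (cases "h' = Some \<omega>") auto
  qed
  ultimately have "phase_invar (r(i := (r i)(C := k))) (num_searchers P s) (s(i := (s i)(C := s i C))) h'
      (s(i := (s i)(C := s i C \<union> set_option h')))"
    using restricted_equilibrium_cell_invar[OF eq]
    by (intro phase_invar_update) auto
  then show ?thesis by simp
qed

lemma restricted_equilibrium_extend:
  assumes eq: "restricted_equilibrium r s" and C: "C \<in> P i" and "r i C < K i"
  shows "\<exists>s'. restricted_equilibrium (r(i := (r i)(C := Suc (r i C)))) s' \<and>
    (\<forall>\<omega>. num_searchers P s \<omega> \<le> num_searchers P s' \<omega>)"
proof -
  have "locally_optimal (nominal_reward (num_searchers P s) (s i C) i) (c i) (r i C) C (s i C)"
    using restricted_equilibrium_cell_invar[OF eq C] unfolding cell_invar_def by blast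
  then obtain h' where "set_option h' \<subseteq> C - s i C" and
    "locally_optimal (nominal_reward (num_searchers P s) (s i C) i) (c i) (Suc (r i C)) C
      (s i C \<union> set_option h')"
    using locally_optimal_extend[OF _ finite] by metis
  then have "phase_invar (r(i := (r i)(C := Suc (r i C)))) (num_searchers P s) s h'
      (s(i := (s i)(C := s i C \<union> set_option h')))"
    using phase_invar_start[OF eq C] \<open>r i C < K i\<close> by simp
  then show ?thesis using phase_terminates by blast
qed

lemma restricted_equilibrium_saturate:
  "restricted_equilibrium r s \<Longrightarrow> \<exists>r' s'. restricted_equilibrium r' s' \<and> (\<forall>i. \<forall>C\<in>P i. r' i C = K i) \<and>
     (\<forall>\<omega>. num_searchers P s \<omega> \<le> num_searchers P s' \<omega>)"
proof (induction "cells_sum (\<lambda>i C. K i - r i C)" arbitrary: r s rule: less_induct)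
  case less
  show ?case
  proof (cases "\<forall>i. \<forall>C\<in>P i. r i C = K i")
    case False
    then obtain i C where C: "C \<in> P i" and "r i C \<noteq> K i" by blast
    moreover have "r i C \<le> K i" using less.prems C unfolding restricted_equilibrium_def by blast
    ultimately have "r i C < K i" by simp
    then obtain s' where eq': "restricted_equilibrium (r(i := (r i)(C := Suc (r i C)))) s'"
      and more: "\<forall>\<omega>. num_searchers P s \<omega> \<le> num_searchers P s' \<omega>"
      using restricted_equilibrium_extend[OF less.prems C] by blast
    have "cells_sum (\<lambda>j D. K j - (r(i := (r i)(C := Suc (r i C)))) j D) < cells_sum (\<lambda>j D. K j - r j D)"
      using C \<open>r i C < K i\<close> by (intro cells_sum_less[of C i]) auto
    then obtain r'' s'' where "restricted_equilibrium r'' s''" "\<forall>i. \<forall>C\<in>P i. r'' i C = K i"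
      and "\<forall>\<omega>. num_searchers P s' \<omega> \<le> num_searchers P s'' \<omega>"
      using less.hyps[OF _ eq'] by blast
    then show ?thesis using more order_trans by blast
  qed (use less.prems in blast)
qed

section \<open>The solitary start\<close>

lemma solitary_search_dominant_rewards:
  assumes "solitary_search_dominant P \<mu> K c v" "C \<in> P i" "x \<in> C" "y \<in> C"
  shows "reward i y 2 \<le> reward i x 1" "marginal (c i) (K i) \<le> reward i x 1"
proof -
  have "cond_prob \<mu> C y * v i 2 y \<le> cond_prob \<mu> C x * v i 1 x"
    "c i (K i) - c i (K i - 1) \<le> cond_prob \<mu> C x * v i 1 x"
    using assms unfolding solitary_search_dominant_def by blast+
  then show "reward i y 2 \<le> reward i x 1" "marginal (c i) (K i) \<le> reward i x 1"
    using cell_eqI[OF assms(2)] assms(3,4) unfolding reward_def marginal_def by simp_all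
qed

definition solitary_value :: "('p \<Rightarrow> 'w set \<Rightarrow> 'w set) \<Rightarrow> real" where
  "solitary_value s = (\<Sum>j\<in>UNIV. \<Sum>\<omega> | searched P s j \<omega>. reward j \<omega> 1)"

lemma solitary_swap:
  assumes s: "s \<in> pure_profiles P K" and solitary: "\<forall>\<omega>. num_searchers P s \<omega> \<le> 1"
    and C: "C \<in> P i" and x: "x \<in> s i C" and y: "y \<in> C" "num_searchers P s y = 0"
  defines "s' \<equiv> s(i := (s i)(C := insert y (s i C - {x})))"
  shows "s' \<in> pure_profiles P K" "\<forall>\<omega>. num_searchers P s' \<omega> \<le> 1"
    and "card {\<omega>. num_searchers P s' \<omega> \<ge> 1} = card {\<omega>. num_searchers P s \<omega> \<ge> 1}"
    and "solitary_value s' = solitary_value s - reward i x 1 + reward i y 1"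
proof -
  have T: "s i C \<subseteq> C" "card (s i C) \<le> K i"
    using s C unfolding pure_profiles_def pure_strategy_def by auto
  have "searched P s i x" using searched_iff[OF C] x T by blast
  then have "num_searchers P s x = other_searchers s i x + 1"
    using num_searchers_split[of s x i] by simp
  then have "num_searchers P s x = 1" using solitary[rule_format, of x] by linarith
  have "y \<notin> s i C" using y searched_iff[OF C y(1), of s] num_searchers_split[of s y i] by auto
  then have "x \<noteq> y" using x by blast
  have card_swap: "card (insert y (s i C - {x})) = card (s i C)"
    using card_insert_remove[OF finite x \<open>y \<notin> s i C\<close>] .
  then show "s' \<in> pure_profiles P K"
    unfolding s'_def using T x y by (intro pure_profiles_update[OF s]) auto
  have counts: "num_searchers P s' \<omega> =
      (if \<omega> = x then 0 else if \<omega> = y then 1 else num_searchers P s \<omega>)" for \<omega>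
    using num_searchers_update_cell[OF C, of s "insert y (s i C - {x})" \<omega>] T x y
      \<open>num_searchers P s x = 1\<close> \<open>y \<notin> s i C\<close> \<open>x \<noteq> y\<close>
    unfolding s'_def by (cases "\<omega> = x"; cases "\<omega> = y") auto
  then show "\<forall>\<omega>. num_searchers P s' \<omega> \<le> 1" using solitary by simp
  have "{\<omega>. num_searchers P s' \<omega> \<ge> 1} = insert y ({\<omega>. num_searchers P s \<omega> \<ge> 1} - {x})"
    using counts \<open>x \<noteq> y\<close> by auto
  then show "card {\<omega>. num_searchers P s' \<omega> \<ge> 1} = card {\<omega>. num_searchers P s \<omega> \<ge> 1}"
    using card_insert_remove[OF finite, of x "{\<omega>. num_searchers P s \<omega> \<ge> 1}" y]
      y \<open>num_searchers P s x = 1\<close> by simp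
  have searched': "{\<omega>. searched P s' j \<omega>} =
      (if j = i then insert y ({\<omega>. searched P s i \<omega>} - {x}) else {\<omega>. searched P s j \<omega>})" for j
    using searched_update_cell[OF C] searched_iff[OF C] x y T unfolding s'_def by auto
  have "y \<notin> {\<omega>. searched P s i \<omega>}" using searched_iff[OF C y(1), of s] \<open>y \<notin> s i C\<close> by simp
  then have "(\<Sum>\<omega> | searched P s' j \<omega>. reward j \<omega> 1) = (\<Sum>\<omega> | searched P s j \<omega>. reward j \<omega> 1)
      + (if j = i then reward i y 1 - reward i x 1 else 0)" for j
    using \<open>searched P s i x\<close> unfolding searched' by (simp add: sum_diff1)
  then show "solitary_value s' = solitary_value s - reward i x 1 + reward i y 1"
    unfolding solitary_value_def by (simp add: sum.distrib)
qed

lemma solitary_profile_locally_optimal: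
  assumes ssd: "solitary_search_dominant P \<mu> K c v" and s: "s \<in> pure_profiles P K"
    and solitary: "\<forall>\<omega>. num_searchers P s \<omega> \<le> 1" and C: "C \<in> P i"
    and no_gain: "\<forall>x\<in>s i C. \<forall>y\<in>C - s i C. num_searchers P s y = 0 \<longrightarrow> reward i y 1 \<le> reward i x 1"
  shows "locally_optimal (entry_reward s i) (c i) (card (s i C)) C (s i C)"
proof -
  have T: "s i C \<subseteq> C" "card (s i C) \<le> K i"
    using s C unfolding pure_profiles_def pure_strategy_def by auto
  have entry_in: "entry_reward s i x = reward i x 1" if "x \<in> s i C" for x
  proof -
    have "searched P s i x" using searched_iff[OF C, of x s] that T by blast
    then have "other_searchers s i x = 0"
      using num_searchers_split[of s x i] solitary[rule_format, of x] by simp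
    then show ?thesis unfolding entry_reward_def by simp
  qed
  have entry_out: "entry_reward s i y = reward i y (num_searchers P s y + 1)" if "y \<in> C - s i C" for y
    using num_searchers_split[of s y i] searched_iff[OF C, of y s] that
    unfolding entry_reward_def by simp
  have swap: "entry_reward s i y \<le> entry_reward s i x" if x: "x \<in> s i C" and y: "y \<in> C - s i C" for x y
  proof (cases "num_searchers P s y = 0")
    case True
    then show ?thesis using no_gain x y entry_in[OF x] entry_out[OF y] by simp
  next
    case False
    then have "num_searchers P s y = 1" using solitary[rule_format, of y] by linarith
    then show ?thesis
      using solitary_search_dominant_rewards(1)[OF ssd C, of x y] entry_in[OF x] entry_out[OF y] x y T
      by (auto simp: numeral_2_eq_2)
  qed
  have marg: "marginal (c i) (card (s i C)) \<le> entry_reward s i x" if x: "x \<in> s i C" for x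
  proof -
    have "1 \<le> card (s i C)" using x by (simp add: Suc_le_eq card_gt_0_iff) blast
    then have "marginal (c i) (card (s i C)) \<le> marginal (c i) (K i)"
      using marginal_mono[OF costs_increasing_increments] T by blast
    also have "\<dots> \<le> entry_reward s i x"
      using solitary_search_dominant_rewards(2)[OF ssd C, of x x] entry_in[OF x] x T by auto
    finally show ?thesis .
  qed
  show ?thesis
    unfolding locally_optimal_def using T swap marg by auto
qed

lemma initial_restricted_equilibrium:
  assumes ssd: "solitary_search_dominant P \<mu> K c v"
  shows "\<exists>s. restricted_equilibrium (\<lambda>i C. card (s i C)) s \<and> location_maximizing P K s"
proof -
  define S where "S = {s. location_maximizing P K s \<and> (\<forall>\<omega>. num_searchers P s \<omega> \<le> 1)}"
  have "S \<noteq> {}" using exists_location_maximizing_solitary unfolding S_def by blast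
  then obtain s where "s \<in> S" and s_max: "\<forall>s'\<in>S. solitary_value s' \<le> solitary_value s"
    using finite_has_maximizer[of S solitary_value] by auto
  then have lm: "location_maximizing P K s" and solitary: "\<forall>\<omega>. num_searchers P s \<omega> \<le> 1"
    and s: "s \<in> pure_profiles P K"
    unfolding S_def location_maximizing_def by auto
  have "reward i y 1 \<le> reward i x 1"
    if C: "C \<in> P i" and x: "x \<in> s i C" and y: "y \<in> C - s i C" "num_searchers P s y = 0" for i C x y
  proof -
    define s' where "s' = s(i := (s i)(C := insert y (s i C - {x})))"
    note swapped = solitary_swap[OF s solitary C x DiffD1[OF y(1)] y(2), folded s'_def]
    have "s' \<in> S"
      using swapped(1-3) lm unfolding S_def location_maximizing_def by simp
    then show ?thesis using s_max swapped(4) by fastforce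
  qed
  then have "restricted_equilibrium (\<lambda>i C. card (s i C)) s"
    using s solitary_profile_locally_optimal[OF ssd s solitary]
    unfolding restricted_equilibrium_def pure_profiles_def pure_strategy_def by auto
  then show ?thesis using lm by blast
qed

lemma exists_location_maximizing_nash:
  assumes "solitary_search_dominant P \<mu> K c v"
  shows "\<exists>s. pure_nash P \<mu> K c v s \<and> location_maximizing P K s"
proof -
  obtain s0 where eq0: "restricted_equilibrium (\<lambda>i C. card (s0 i C)) s0"
    and lm0: "location_maximizing P K s0"
    using initial_restricted_equilibrium[OF assms] by blast
  obtain r s where eq: "restricted_equilibrium r s" and full: "\<forall>i. \<forall>C\<in>P i. r i C = K i"
    and more: "\<forall>\<omega>. num_searchers P s0 \<omega> \<le> num_searchers P s \<omega>"
    using restricted_equilibrium_saturate[OF eq0] by blast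
  have "pure_nash P \<mu> K c v s" using restricted_equilibrium_imp_nash[OF eq full] .
  moreover have "location_maximizing P K s"
    using location_maximizing_mono[OF lm0 restricted_equilibrium_in_profiles[OF eq] more] .
  ultimately show ?thesis by blast
qed

end

theorem corollary2:
  fixes P :: "'p::finite \<Rightarrow> 'w::finite set set"
    and \<mu> :: "'w \<Rightarrow> real" and K :: "'p \<Rightarrow> nat" and c :: "'p \<Rightarrow> nat \<Rightarrow> real"
    and v :: "'p \<Rightarrow> nat \<Rightarrow> 'w \<Rightarrow> real" and vs :: "'w \<Rightarrow> real"
  assumes "search_game P \<mu> K c v vs"
    and "solitary_search_dominant P \<mu> K c v"
  shows "\<exists>s. pure_nash P \<mu> K c v s \<and> location_maximizing P K s"
proof -
  interpret search_game_model P \<mu> K c v vs using assms(1) by unfold_locales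
  show ?thesis using exists_location_maximizing_nash[OF assms(2)] .
qed

end
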